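(* Let $D=\{x\in X : \langle a,x\rangle=\beta\}$ with $X=[\alpha'_1,\alpha''_1]\times\cdots\times[\alpha'_n,\alpha''_n]$, where $\alpha'_i<\alpha''_i$ are finite, $a=(a_1,\dots,a_n)^\top$ has $a_i>0$ for all $i\in I=\{1,\dots,n\}$, $\beta\in\mathbb{R}$, and $D\neq\varnothing$. Let $f:\mathbb{R}^n\to\mathbb{R}$ be locally Lipschitz on $X$. Then for a point $x^*$ the following are equivalent: (1) $x^*\in D$ and there exists $g^*\in\partial^{\uparrow}f(x^* )$ such that $\langle g^*,x-x^*\rangle\ge 0$ for all $x\in D$ (i.e. $x^*$ solves the variational inequality (VI)); (2) $x^*\in D$ and there exist $g^*\in\partial^{\uparrow}f(x^* )$ and $\lambda\in\mathbb{R}$ such that $\langle g^*-\lambda a,x-x^*\rangle\ge0$ for all $x\in X$; (3) $x^*\in D$ and there exist $g^*\in\partial^{\uparrow}f(x^* )$ and $\lambda\in\mathbb{R}$ such that for each $i\in I$: $(1/a_i)g^*_i\ge\lambda$ if $x^*_i=\alpha'_i$; $(1/a_i)g^*_i=\lambda$ if $x^*_i\in(\alpha'_i,\alpha''_i)$; $(1/a_i)g^*_i\le\lambda$ if $x^*_i=\alpha''_i$; (4) $x^*\in D$ and there exists $g^*\in\partial^{\uparrow}f(x^* )$ such that for all $i,j\in I$, $i\ne j$: if $(1/a_i)g^*_i>(1/a_j)g^*_j$ then $x^*_i=\alpha'_i$ or $x^*_j=\alpha''_j$; (5) $x^*\in D$ and there exists $g^*\in\partial^{\uparrow}f(x^*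 )$ such that for all $i,j\in I$, $i\neq j$: if $x^*_i\in(\alpha'_i,\alpha''_i]$ and $x^*_j\in[\alpha'_j,\alpha''_j)$ then $(1/a_i)g^*_i\le(1/a_j)g^*_j$.
   Context: For $f$ Lipschitz continuous near $x$, the upper Clarke–Rockafellar derivative is $f^{\uparrow}(x;p)=\limsup_{y\to x,\ \alpha\searrow0}(f(y+\alpha p)-f(y))/\alpha$, and the (Clarke) generalized gradient is $\partial^{\uparrow}f(x)=\{g\in\mathbb{R}^n:\langle g,p\rangle\le f^{\uparrow}(x;p)\ \forall p\in\mathbb{R}^n\}$, a nonempty convex compact set. *)

theory Defs
  imports "HOL-Analysis.Analysis"
begin

definition clarke_dir :: "('a::real_normed_vector \<Rightarrow> real) \<Rightarrow> 'a \<Rightarrow> 'a \<Rightarrow> ereal" where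
  "clarke_dir f x p =
     Limsup (at (x, 0) within (UNIV \<times> {0<..}))
       (\<lambda>(y, \<alpha>::real). ereal ((f (y + \<alpha> *\<^sub>R p) - f y) / \<alpha>))"

definition clarke_grad :: "('a::real_inner \<Rightarrow> real) \<Rightarrow> 'a \<Rightarrow> 'a set" where
  "clarke_grad f x = {g. \<forall>p. ereal (inner g p) \<le> clarke_dir f x p}"

definition locally_lipschitz_on :: "'a::metric_space set \<Rightarrow> ('a \<Rightarrow> real) \<Rightarrow> bool" where
  "locally_lipschitz_on X f \<longleftrightarrow> (\<forall>x\<in>X. \<exists>e>0. \<exists>L. L-lipschitz_on (ball x e) f)"

definition boxX :: "real^'n \<Rightarrow> real^'n \<Rightarrow> (real^'n) set" where
  "boxX lo hi = {x. \<forall>i. lo$i \<le> x$i \<and> x$i \<le> hi$i}"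

definition feasD :: "real^'n \<Rightarrow> real^'n \<Rightarrow> real^'n \<Rightarrow> real \<Rightarrow> (real^'n) set" where
  "feasD lo hi a \<beta> = {x \<in> boxX lo hi. inner a x = \<beta>}"

end

theory Submission
  imports Defs
begin

text \<open>With \<open>r\<^sub>i = g\<^sub>i / a\<^sub>i\<close>, each
  condition says that \<open>r\<^sub>i \<le> r\<^sub>j\<close> whenever \<open>x\<^sub>i\<close> can still decrease and \<open>x\<^sub>j\<close> can still increase:
  shifting \<open>t\<close> units of \<open>\<langle>a,x\<rangle>\<close> from coordinate \<open>i\<close> to \<open>j\<close> keeps \<open>x\<close> in \<open>D\<close> and changes
  \<open>\<langle>g, x - x\<^sup>*\<rangle>\<close> by \<open>t (r\<^sub>j - r\<^sub>i)\<close>. A finite family of such pairwise inequalities is exactly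
  the existence of a value \<open>\<lambda>\<close> separating the two groups of ratios, which is the multiplier
  of the constraint \<open>\<langle>a,x\<rangle> = \<beta>\<close> in the box.\<close>

definition exchange_optimal :: "real^'n \<Rightarrow> real^'n \<Rightarrow> real^'n \<Rightarrow> real^'n \<Rightarrow> real^'n \<Rightarrow> bool" where
  "exchange_optimal lo hi a g xs \<longleftrightarrow>
     (\<forall>i j. lo$i < xs$i \<longrightarrow> xs$j < hi$j \<longrightarrow> g$i / a$i \<le> g$j / a$j)"

definition ratio_bounded :: "real^'n \<Rightarrow> real^'n \<Rightarrow> real^'n \<Rightarrow> real^'n \<Rightarrow> real^'n \<Rightarrow> real \<Rightarrow> bool" where
  "ratio_bounded lo hi a g xs lam \<longleftrightarrow>
     (\<forall>i. (lo$i < xs$i \<longrightarrow> g$i / a$i \<le> lam) \<and> (xs$i < hi$i \<longrightarrow> lam \<le> g$i / a$i))"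

lemma boxX_nth_bounds: "x \<in> boxX lo hi \<Longrightarrow> lo$i \<le> x$i \<and> x$i \<le> hi$i"
  by (simp add: boxX_def)

lemma ex_between_iff:
  fixes r :: "'a \<Rightarrow> real"
  assumes "finite A" "finite B"
  shows "(\<exists>lam. (\<forall>i\<in>A. r i \<le> lam) \<and> (\<forall>j\<in>B. lam \<le> r j)) \<longleftrightarrow> (\<forall>i\<in>A. \<forall>j\<in>B. r i \<le> r j)"
proof
  assume sep: "\<forall>i\<in>A. \<forall>j\<in>B. r i \<le> r j"
  show "\<exists>lam. (\<forall>i\<in>A. r i \<le> lam) \<and> (\<forall>j\<in>B. lam \<le> r j)"
  proof (cases "A = {}")
    case True
    have "\<exists>lam. \<forall>j\<in>B. lam \<le> r j"
      using assms(2) by (metis Min_le finite_imageI image_eqI)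
    with True show ?thesis by blast
  next
    case False
    then show ?thesis
      using assms(1) sep by (intro exI[of _ "Max (r ` A)"]) (auto simp: Max_le_iff)
  qed
qed force

lemma inner_nonneg_on_box_iff:
  fixes h xs :: "real^'n"
  assumes xs: "xs \<in> boxX lo hi"
  shows "(\<forall>x\<in>boxX lo hi. 0 \<le> inner h (x - xs)) \<longleftrightarrow>
         (\<forall>i. (lo$i < xs$i \<longrightarrow> h$i \<le> 0) \<and> (xs$i < hi$i \<longrightarrow> 0 \<le> h$i))"
proof
  assume VI: "\<forall>x\<in>boxX lo hi. 0 \<le> inner h (x - xs)"
  have move: "0 \<le> h$i * c" if "lo$i \<le> xs$i + c" "xs$i + c \<le> hi$i" for i c
  proof -
    have "xs + axis i c \<in> boxX lo hi"
      using xs that by (auto simp: boxX_def axis_def)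
    with VI show ?thesis by (force simp: inner_axis)
  qed
  show "\<forall>i. (lo$i < xs$i \<longrightarrow> h$i \<le> 0) \<and> (xs$i < hi$i \<longrightarrow> 0 \<le> h$i)"
  proof (intro allI conjI impI)
    fix i
    show "h$i \<le> 0" if "lo$i < xs$i"
      using move[of i "lo$i - xs$i"] boxX_nth_bounds[OF xs, of i] that
      by (simp add: zero_le_mult_iff)
    show "0 \<le> h$i" if "xs$i < hi$i"
      using move[of i "hi$i - xs$i"] boxX_nth_bounds[OF xs, of i] that
      by (simp add: zero_le_mult_iff)
  qed
next
  assume sign: "\<forall>i. (lo$i < xs$i \<longrightarrow> h$i \<le> 0) \<and> (xs$i < hi$i \<longrightarrow> 0 \<le> h$i)"
  show "\<forall>x\<in>boxX lo hi. 0 \<le> inner h (x - xs)"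
  proof
    fix x assume x: "x \<in> boxX lo hi"
    have "0 \<le> h$i * (x$i - xs$i)" for i
    proof (cases "x$i \<le> xs$i")
      case True
      then have "x$i < xs$i \<Longrightarrow> h$i \<le> 0"
        using sign boxX_nth_bounds[OF x, of i] by force
      with True show ?thesis
        by (cases "x$i = xs$i") (simp_all add: mult_nonpos_nonpos)
    next
      case False
      then have "0 \<le> h$i"
        using sign boxX_nth_bounds[OF x, of i] by force
      with False show ?thesis by simp
    qed
    then show "0 \<le> inner h (x - xs)"
      by (simp add: inner_vec_def sum_nonneg)
  qed
qed

lemma box_multiplier_iff_ratio_bounded:
  fixes a g xs :: "real^'n"
  assumes apos: "\<forall>i. a$i > 0" and xs: "xs \<in> boxX lo hi"
  shows "(\<forall>x\<in>boxX lo hi. 0 \<le> inner (g - lam *\<^sub>R a) (x - xs)) \<longleftrightarrow> ratio_bounded lo hi a g xs lam"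
proof -
  have "g$i - lam * a$i \<le> 0 \<longleftrightarrow> g$i / a$i \<le> lam" "0 \<le> g$i - lam * a$i \<longleftrightarrow> lam \<le> g$i / a$i" for i
    using apos[rule_format, of i] by (simp_all add: divide_le_eq le_divide_eq)
  then show ?thesis
    by (simp add: inner_nonneg_on_box_iff[OF xs] ratio_bounded_def)
qed

lemma ex_ratio_bounded_iff_exchange_optimal:
  "(\<exists>lam. ratio_bounded lo hi a g xs lam) \<longleftrightarrow> exchange_optimal lo hi a g xs"
  using ex_between_iff[of "{i. lo$i < xs$i}" "{j. xs$j < hi$j}" "\<lambda>i. g$i / a$i"]
  by (simp add: ratio_bounded_def exchange_optimal_def) blast

lemma exchange_optimal_if_inner_nonneg_on_feasD:
  fixes lo hi a g xs :: "real^'n"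
  assumes apos: "\<forall>i. a$i > 0" and xs: "xs \<in> feasD lo hi a \<beta>"
    and VI: "\<forall>x\<in>feasD lo hi a \<beta>. 0 \<le> inner g (x - xs)"
  shows "exchange_optimal lo hi a g xs"
  unfolding exchange_optimal_def
proof (intro allI impI)
  fix i j assume lo_i: "lo$i < xs$i" and hi_j: "xs$j < hi$j"
  show "g$i / a$i \<le> g$j / a$j"
  proof (rule ccontr)
    assume less: "\<not> g$i / a$i \<le> g$j / a$j"
    then have ij: "i \<noteq> j" by auto
    have xsX: "xs \<in> boxX lo hi" and ax: "inner a xs = \<beta>"
      using xs by (auto simp: feasD_def)
    have ai: "a$i > 0" "a$j > 0" using apos by auto
    define t where "t = min (a$i * (xs$i - lo$i)) (a$j * (hi$j - xs$j))"
    have t: "0 < t" "0 < t / a$i" "t / a$i \<le> xs$i - lo$i" "0 < t / a$j" "t / a$j \<le> hi$j - xs$j"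
      using ai lo_i hi_j by (auto simp: t_def divide_le_eq mult.commute)
    define x where "x = xs - axis i (t / a$i) + axis j (t / a$j)"
    have x_nth: "x$k = xs$k - (if k = i then t / a$i else 0) + (if k = j then t / a$j else 0)" for k
      by (simp add: x_def axis_def)
    have "lo$k \<le> x$k \<and> x$k \<le> hi$k" for k
      using boxX_nth_bounds[OF xsX, of k] t ij unfolding x_nth by auto
    then have "x \<in> boxX lo hi"
      by (simp add: boxX_def)
    moreover have "inner a x = \<beta>"
      using ax ai by (simp add: x_def inner_diff_right inner_add_right inner_axis)
    ultimately have "0 \<le> inner g (x - xs)"
      using VI by (simp add: feasD_def)
    also have "inner g (x - xs) = t * (g$j / a$j - g$i / a$i)"
      by (simp add: x_def inner_diff_right inner_add_right inner_axis algebra_simps)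
    also have "\<dots> < 0"
      using t ai less by (simp add: mult_pos_neg)
    finally show False by simp
  qed
qed

lemma inner_nonneg_on_feasD_iff_exchange_optimal:
  fixes lo hi a g xs :: "real^'n"
  assumes apos: "\<forall>i. a$i > 0" and xs: "xs \<in> feasD lo hi a \<beta>"
  shows "(\<forall>x\<in>feasD lo hi a \<beta>. 0 \<le> inner g (x - xs)) \<longleftrightarrow> exchange_optimal lo hi a g xs"
proof
  assume "exchange_optimal lo hi a g xs"
  then obtain lam where "\<forall>x\<in>boxX lo hi. 0 \<le> inner (g - lam *\<^sub>R a) (x - xs)"
    using xs box_multiplier_iff_ratio_bounded[OF apos] ex_ratio_bounded_iff_exchange_optimal
    by (metis (no_types, lifting) feasD_def mem_Collect_eq)
  moreover have "inner a (x - xs) = 0" if "x \<in> feasD lo hi a \<beta>" for x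
    using that xs by (simp add: feasD_def inner_diff_right)
  ultimately show "\<forall>x\<in>feasD lo hi a \<beta>. 0 \<le> inner g (x - xs)"
    by (force simp: feasD_def inner_diff_left)
qed (rule exchange_optimal_if_inner_nonneg_on_feasD[OF apos xs])

lemma box_multiplier_iff_exchange_optimal:
  fixes a g xs :: "real^'n"
  assumes "\<forall>i. a$i > 0" and "xs \<in> boxX lo hi"
  shows "(\<exists>lam. \<forall>x\<in>boxX lo hi. 0 \<le> inner (g - lam *\<^sub>R a) (x - xs)) \<longleftrightarrow>
         exchange_optimal lo hi a g xs"
  by (simp add: box_multiplier_iff_ratio_bounded[OF assms] ex_ratio_bounded_iff_exchange_optimal)

lemma complementarity_iff_exchange_optimal:
  fixes lo hi a g xs :: "real^'n"
  assumes lohi: "\<forall>i. lo$i < hi$i" and xs: "xs \<in> boxX lo hi"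
  shows "(\<exists>lam. \<forall>i. (xs$i = lo$i \<longrightarrow> lam \<le> g$i / a$i) \<and>
                    (lo$i < xs$i \<and> xs$i < hi$i \<longrightarrow> g$i / a$i = lam) \<and>
                    (xs$i = hi$i \<longrightarrow> g$i / a$i \<le> lam)) \<longleftrightarrow>
         exchange_optimal lo hi a g xs"
proof -
  have "(\<forall>i. (xs$i = lo$i \<longrightarrow> lam \<le> g$i / a$i) \<and>
             (lo$i < xs$i \<and> xs$i < hi$i \<longrightarrow> g$i / a$i = lam) \<and>
             (xs$i = hi$i \<longrightarrow> g$i / a$i \<le> lam)) \<longleftrightarrow> ratio_bounded lo hi a g xs lam" for lam
  proof -
    have "((xs$i = lo$i \<longrightarrow> lam \<le> g$i / a$i) \<and>
           (lo$i < xs$i \<and> xs$i < hi$i \<longrightarrow> g$i / a$i = lam) \<and>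
           (xs$i = hi$i \<longrightarrow> g$i / a$i \<le> lam)) \<longleftrightarrow>
          ((lo$i < xs$i \<longrightarrow> g$i / a$i \<le> lam) \<and> (xs$i < hi$i \<longrightarrow> lam \<le> g$i / a$i))" for i
      using lohi[rule_format, of i] boxX_nth_bounds[OF xs, of i]
      by (cases "xs$i = lo$i"; cases "xs$i = hi$i") auto
    then show ?thesis
      unfolding ratio_bounded_def by blast
  qed
  then show ?thesis
    by (simp add: ex_ratio_bounded_iff_exchange_optimal)
qed

lemma pairwise_exchange_iff_exchange_optimal:
  fixes lo hi a g xs :: "real^'n"
  assumes xs: "xs \<in> boxX lo hi"
  shows "(\<forall>i j. i \<noteq> j \<longrightarrow> g$i / a$i > g$j / a$j \<longrightarrow> xs$i = lo$i \<or> xs$j = hi$j) \<longleftrightarrow>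
         exchange_optimal lo hi a g xs"
  using boxX_nth_bounds[OF xs] unfolding exchange_optimal_def
  by (metis less_irrefl not_le order_le_less)

lemma free_pair_ordered_iff_exchange_optimal:
  fixes lo hi a g xs :: "real^'n"
  assumes xs: "xs \<in> boxX lo hi"
  shows "(\<forall>i j. i \<noteq> j \<longrightarrow> (lo$i < xs$i \<and> xs$i \<le> hi$i) \<longrightarrow> (lo$j \<le> xs$j \<and> xs$j < hi$j) \<longrightarrow>
            g$i / a$i \<le> g$j / a$j) \<longleftrightarrow>
         exchange_optimal lo hi a g xs"
  using boxX_nth_bounds[OF xs] unfolding exchange_optimal_def by (metis order_refl)

theorem proposition2p2:
  fixes lo hi a :: "real^'n" and \<beta> :: real and f :: "real^'n \<Rightarrow> real" and xs :: "real^'n"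
  assumes lohi: "\<forall>i. lo$i < hi$i"
    and apos: "\<forall>i. a$i > 0"
    and Dne: "feasD lo hi a \<beta> \<noteq> {}"
    and lip: "locally_lipschitz_on (boxX lo hi) f"
  defines "D \<equiv> feasD lo hi a \<beta>" and "X \<equiv> boxX lo hi"
  shows
   "((xs \<in> D \<and> (\<exists>g\<in>clarke_grad f xs. \<forall>x\<in>D. inner g (x - xs) \<ge> 0))
     \<longleftrightarrow> (xs \<in> D \<and> (\<exists>g\<in>clarke_grad f xs. \<exists>lam::real.
            \<forall>x\<in>X. inner (g - lam *\<^sub>R a) (x - xs) \<ge> 0)))
  \<and> ((xs \<in> D \<and> (\<exists>g\<in>clarke_grad f xs. \<exists>lam::real.
            \<forall>x\<in>X. inner (g - lam *\<^sub>R a) (x - xs) \<ge> 0))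
     \<longleftrightarrow> (xs \<in> D \<and> (\<exists>g\<in>clarke_grad f xs. \<exists>lam::real. \<forall>i.
            (xs$i = lo$i \<longrightarrow> g$i / a$i \<ge> lam) \<and>
            (lo$i < xs$i \<and> xs$i < hi$i \<longrightarrow> g$i / a$i = lam) \<and>
            (xs$i = hi$i \<longrightarrow> g$i / a$i \<le> lam))))
  \<and> ((xs \<in> D \<and> (\<exists>g\<in>clarke_grad f xs. \<exists>lam::real. \<forall>i.
            (xs$i = lo$i \<longrightarrow> g$i / a$i \<ge> lam) \<and>
            (lo$i < xs$i \<and> xs$i < hi$i \<longrightarrow> g$i / a$i = lam) \<and>
            (xs$i = hi$i \<longrightarrow> g$i / a$i \<le> lam)))
     \<longleftrightarrow> (xs \<in> D \<and> (\<exists>g\<in>clarke_grad f xs. \<forall>i j. i \<noteq> j \<longrightarrow>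
            g$i / a$i > g$j / a$j \<longrightarrow> xs$i = lo$i \<or> xs$j = hi$j)))
  \<and> ((xs \<in> D \<and> (\<exists>g\<in>clarke_grad f xs. \<forall>i j. i \<noteq> j \<longrightarrow>
            g$i / a$i > g$j / a$j \<longrightarrow> xs$i = lo$i \<or> xs$j = hi$j))
     \<longleftrightarrow> (xs \<in> D \<and> (\<exists>g\<in>clarke_grad f xs. \<forall>i j. i \<noteq> j \<longrightarrow>
            (lo$i < xs$i \<and> xs$i \<le> hi$i) \<longrightarrow> (lo$j \<le> xs$j \<and> xs$j < hi$j) \<longrightarrow>
            g$i / a$i \<le> g$j / a$j)))"
proof (cases "xs \<in> D")
  case True
  then have xsD: "xs \<in> feasD lo hi a \<beta>" and xsX: "xs \<in> boxX lo hi"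
    by (simp_all add: D_def feasD_def)
  show ?thesis
    unfolding D_def X_def
    by (simp only: xsD inner_nonneg_on_feasD_iff_exchange_optimal[OF apos xsD]
        box_multiplier_iff_exchange_optimal[OF apos xsX]
        complementarity_iff_exchange_optimal[OF lohi xsX]
        pairwise_exchange_iff_exchange_optimal[OF xsX]
        free_pair_ordered_iff_exchange_optimal[OF xsX])
qed simp

end
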